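(* Let $\mathbb K$ be a field with $2\in\mathbb K^\times$, $A$ a unital commutative associative $\mathbb K$-algebra with unit $\mathbf 1$, $\mathfrak k$ a $\mathbb K$-Lie algebra and $\mathfrak g=A\otimes\mathfrak k$. Then $\mathfrak g$ possesses coupled cocycles if and only if $d_A(A)\neq\{0\}$ and there is an invariant symmetric bilinear form $\kappa:\mathfrak k\times\mathfrak k\to\mathbb K$ such that $\Gamma(\kappa)$ is a non-zero coboundary in $Z^3(\mathfrak k)$. If this is not the case, then for every vector space $\mathfrak z$, every $\mathfrak z$-valued 2-cocycle $f=f_1\circ p_1+f_2\circ p_2+f_3\circ p_3$ on $\mathfrak g$ admits a decomposition $f_1=f_1^0+f_1^1$ (linear maps $\Lambda^2(A)\otimes S^2(\mathfrak k)\to\mathfrak z$) such that $f_1^0\circ p_1$, $f_1^1\circ p_1$, $f_2\circ p_2$, $f_3\circ p_3$ are each 2-cocycles and (a) $f_1^0\circ p_1$ vanishes on $\mathfrak g\times\mathfrak g'$; (b) $\tilde f_1^1$ takes values in the invariant symmetric bilinear maps $\mathfrak k\times\mathfrak k\to\mathfrak z$ and is a cyclic 1-cocycle; (c) $\tilde f_2(A)\subseteq Z^2(\mathfrak k,\mathfrak z)$; (d) $f_3\circ p_3$ vanishes on $\mathfrak g\times\mathfrak g'$.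
   Context: $\mathfrak g$ has bracket $[a\otimes x,a'\otimes x']=aa'\otimes[x,x']$; $ax=a\otimes x$; $\mathfrak k'=[\mathfrak k,\mathfrak k]$, $\mathfrak g'=A\otimes\mathfrak k'$. $v\wedge w=\tfrac12(v\otimes w-w\otimes v)$, $v\vee w=\tfrac12(v\otimes w+w\otimes v)$. $I_A\subseteq S^2(A)$ is the kernel of multiplication $S^2(A)\to A$. Linear maps $p_1(ax\wedge by)=a\wedge b\otimes x\vee y$, $p_2(ax\wedge by)=ab\otimes x\wedge y$, $p_3(ax\wedge by)=(a\vee b-ab\vee\mathbf 1)\otimes x\wedge y$ give an isomorphism $\Lambda^2(\mathfrak g)\cong(\Lambda^2(A)\otimes S^2(\mathfrak k))\oplus(A\otimes\Lambda^2(\mathfrak k))\oplus(I_A\otimes\Lambda^2(\mathfrak k))$, so every linear $f:\Lambda^2(\mathfrak g)\to\mathfrak z$ is uniquely $f_1\circ p_1+f_2\circ p_2+f_3\circ p_3$. Alternating bilinear maps on $\mathfrak g$ are identified with linear maps on $\Lambda^2(\mathfrak g)$ via $f(u,v)=f(u\wedge v)$. A $\mathfrak z$-valued 2-cocycle is such an $f$ vanishing on $\mathrm{span}\{[u,v]\wedge w+[v,w]\wedge u+[w,u]\wedge v\}$. $\tilde f_1(a,b)(x,y)=f_1(a\wedge b\otimes x\vee y)$, $\tilde f_2(a)(x,y)=f_2(a\otimes x\wedge y)$, similarly $\tilde f_1^1$. A coupled cocycle is a $\mathfrak z$-valued 2-cocycle (for some vector space $\mathfrak z$) with $f_3=0$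 for which $f_1\circ p_1$ is not a 2-cocycle; "$\mathfrak g$ possesses coupled cocycles" means one exists for some $\mathfrak z$. $(\Omega^1(A),d_A)$ is the universal differential module of $A$. Invariance: $\kappa([x,y],z)=\kappa(x,[y,z])$; $\Gamma(\kappa)(x,y,z)=\kappa([x,y],z)$. $Z^p(\mathfrak k,\mathfrak z)$, $B^p$ denote Chevalley–Eilenberg cocycles/coboundaries with trivial coefficients ($Z^3(\mathfrak k)$ for $\mathbb K$). A cyclic 1-cocycle is an alternating bilinear $\phi$ on $A$ with $\phi(a,bc)+\phi(b,ca)+\phi(c,ab)=0$. *)

theory Defs
  imports Main "HOL.Vector_Spaces"
begin

text \<open>
  The algebra A is a type 'a::comm_ring with K-scaling smA and unit e.
  The Lie algebra k is a type 'l with scaling smL and bracket br.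
  Since g = A (x) k and Lambda^2(g) are not available as types, a linear map
  f : Lambda^2(g) -> z (= alternating bilinear map on g) is encoded, via the
  universal property of the tensor product, by the 4-linear map
  F a x b y = f(ax, by), which must satisfy F a x b y = - F b y a x.
\<close>

definition is_lin :: "('k \<Rightarrow> 'b \<Rightarrow> 'b) \<Rightarrow> ('k \<Rightarrow> 'c \<Rightarrow> 'c) \<Rightarrow> ('b::plus \<Rightarrow> 'c::plus) \<Rightarrow> bool" where
  "is_lin s1 s2 f \<longleftrightarrow> (\<forall>u v. f (u + v) = f u + f v) \<and> (\<forall>c u. f (s1 c u) = s2 c (f u))"

text \<open>A unital commutative associative K-algebra (commutativity and associativity
  come from the class comm_ring; e is the unit).\<close>
definition comm_K_algebra :: "('k::field \<Rightarrow> 'a::comm_ring \<Rightarrow> 'a) \<Rightarrow> 'a \<Rightarrow> bool" where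
  "comm_K_algebra smA e \<longleftrightarrow> Vector_Spaces.vector_space smA
     \<and> (\<forall>c a b. smA c (a * b) = smA c a * b)
     \<and> (\<forall>a. e * a = a)"

definition lie_algebra :: "('k::field \<Rightarrow> 'l::ab_group_add \<Rightarrow> 'l) \<Rightarrow> ('l \<Rightarrow> 'l \<Rightarrow> 'l) \<Rightarrow> bool" where
  "lie_algebra smL br \<longleftrightarrow> Vector_Spaces.vector_space smL
     \<and> (\<forall>y. is_lin smL smL (\<lambda>x. br x y)) \<and> (\<forall>x. is_lin smL smL (\<lambda>y. br x y))
     \<and> (\<forall>x. br x x = 0)
     \<and> (\<forall>x y z. br x (br y z) + br y (br z x) + br z (br x y) = 0)"

text \<open>F encodes a linear map Lambda^2(g) -> z, i.e. F a x b y = f(a x \<and> b y).\<close>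
definition g_form :: "('k::field \<Rightarrow> 'a::comm_ring \<Rightarrow> 'a) \<Rightarrow> ('k \<Rightarrow> 'l::ab_group_add \<Rightarrow> 'l)
    \<Rightarrow> ('k \<Rightarrow> 'z::ab_group_add \<Rightarrow> 'z) \<Rightarrow> ('a \<Rightarrow> 'l \<Rightarrow> 'a \<Rightarrow> 'l \<Rightarrow> 'z) \<Rightarrow> bool" where
  "g_form smA smL smZ F \<longleftrightarrow>
     (\<forall>x b y. is_lin smA smZ (\<lambda>a. F a x b y)) \<and> (\<forall>a b y. is_lin smL smZ (\<lambda>x. F a x b y))
   \<and> (\<forall>a x y. is_lin smA smZ (\<lambda>b. F a x b y)) \<and> (\<forall>a x b. is_lin smL smZ (\<lambda>y. F a x b y))
   \<and> (\<forall>a x b y. F a x b y = - F b y a x)"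

text \<open>Cocycle condition: f vanishes on [u,v]\<and>w + [v,w]\<and>u + [w,u]\<and>v; by multilinearity
  it suffices (and is necessary) to check it on pure tensors u = a x, v = b y, w = c w,
  using [a x, b y] = ab [x,y].\<close>
definition g_cocycle :: "('l \<Rightarrow> 'l \<Rightarrow> 'l) \<Rightarrow> ('a::comm_ring \<Rightarrow> 'l \<Rightarrow> 'a \<Rightarrow> 'l \<Rightarrow> 'z::ab_group_add) \<Rightarrow> bool" where
  "g_cocycle br F \<longleftrightarrow> (\<forall>a b c x y w.
     F (a * b) (br x y) c w + F (b * c) (br y w) a x + F (c * a) (br w x) b y = 0)"

text \<open>f vanishes on g x g' where g' = A (x) [k,k] is spanned by b [y,w].\<close>
definition vanishes_g_g' :: "('l \<Rightarrow> 'l \<Rightarrow> 'l) \<Rightarrow> ('a \<Rightarrow> 'l \<Rightarrow> 'a \<Rightarrow> 'l \<Rightarrow> 'z::zero) \<Rightarrow> bool" where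
  "vanishes_g_g' br F \<longleftrightarrow> (\<forall>a x b y w. F a x b (br y w) = 0)"

text \<open>Components of f = f1 o p1 + f2 o p2 + f3 o p3:
  comp1 F a b x y = f1(a\<and>b \<otimes> x\<or>y)  (i.e. tilde f1 (a,b) (x,y)),
  comp2 F a x y   = f2(a \<otimes> x\<and>y)    (i.e. tilde f2 (a) (x,y)),
  comp3 F a b x y = f3((a\<or>b - ab\<or>1) \<otimes> x\<and>y).\<close>
definition comp1 :: "('k::field \<Rightarrow> 'z::ab_group_add \<Rightarrow> 'z) \<Rightarrow> ('a \<Rightarrow> 'l \<Rightarrow> 'a \<Rightarrow> 'l \<Rightarrow> 'z)
    \<Rightarrow> 'a \<Rightarrow> 'a \<Rightarrow> 'l \<Rightarrow> 'l \<Rightarrow> 'z" where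
  "comp1 smZ F a b x y = smZ (inverse 2) (F a x b y + F a y b x)"

definition comp2 :: "('k::field \<Rightarrow> 'z::ab_group_add \<Rightarrow> 'z) \<Rightarrow> 'a \<Rightarrow> ('a \<Rightarrow> 'l \<Rightarrow> 'a \<Rightarrow> 'l \<Rightarrow> 'z)
    \<Rightarrow> 'a \<Rightarrow> 'l \<Rightarrow> 'l \<Rightarrow> 'z" where
  "comp2 smZ e F a x y = smZ (inverse 2) (F a x e y - F a y e x)"

definition comp3 :: "('k::field \<Rightarrow> 'z::ab_group_add \<Rightarrow> 'z) \<Rightarrow> 'a::comm_ring \<Rightarrow> ('a \<Rightarrow> 'l \<Rightarrow> 'a \<Rightarrow> 'l \<Rightarrow> 'z)
    \<Rightarrow> 'a \<Rightarrow> 'a \<Rightarrow> 'l \<Rightarrow> 'l \<Rightarrow> 'z" where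
  "comp3 smZ e F a b x y = smZ (inverse 2) (F a x b y - F a y b x) - comp2 smZ e F (a * b) x y"

definition p1_form :: "('a \<Rightarrow> 'a \<Rightarrow> 'l \<Rightarrow> 'l \<Rightarrow> 'z) \<Rightarrow> 'a \<Rightarrow> 'l \<Rightarrow> 'a \<Rightarrow> 'l \<Rightarrow> 'z" where
  "p1_form G a x b y = G a b x y"

definition p2_form :: "('a::times \<Rightarrow> 'l \<Rightarrow> 'l \<Rightarrow> 'z) \<Rightarrow> 'a \<Rightarrow> 'l \<Rightarrow> 'a \<Rightarrow> 'l \<Rightarrow> 'z" where
  "p2_form H a x b y = H (a * b) x y"

definition p3_form :: "('a \<Rightarrow> 'a \<Rightarrow> 'l \<Rightarrow> 'l \<Rightarrow> 'z) \<Rightarrow> 'a \<Rightarrow> 'l \<Rightarrow> 'a \<Rightarrow> 'l \<Rightarrow> 'z" where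
  "p3_form K a x b y = K a b x y"

text \<open>G encodes a linear map Lambda^2(A) (x) S^2(k) -> z: G a b x y = f(a\<and>b \<otimes> x\<or>y).\<close>
definition LS_form :: "('k::field \<Rightarrow> 'a::comm_ring \<Rightarrow> 'a) \<Rightarrow> ('k \<Rightarrow> 'l::ab_group_add \<Rightarrow> 'l)
    \<Rightarrow> ('k \<Rightarrow> 'z::ab_group_add \<Rightarrow> 'z) \<Rightarrow> ('a \<Rightarrow> 'a \<Rightarrow> 'l \<Rightarrow> 'l \<Rightarrow> 'z) \<Rightarrow> bool" where
  "LS_form smA smL smZ G \<longleftrightarrow>
     (\<forall>b x y. is_lin smA smZ (\<lambda>a. G a b x y)) \<and> (\<forall>a x y. is_lin smA smZ (\<lambda>b. G a b x y))
   \<and> (\<forall>a b y. is_lin smL smZ (\<lambda>x. G a b x y)) \<and> (\<forall>a b x. is_lin smL smZ (\<lambda>y. G a b x y))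
   \<and> (\<forall>a b x y. G a b x y = - G b a x y) \<and> (\<forall>a b x y. G a b x y = G a b y x)"

definition g_2cocycle where
  "g_2cocycle smA smL smZ br F \<longleftrightarrow> g_form smA smL smZ F \<and> g_cocycle br F"

text \<open>Coupled cocycle: a 2-cocycle with f3 = 0 such that f1 o p1 is not a 2-cocycle.
  (f3 = 0 iff it vanishes on the spanning set (a\<or>b - ab\<or>1) \<otimes> x\<and>y of I_A \<otimes> Lambda^2 k.)\<close>
definition coupled_cocycle where
  "coupled_cocycle smA smL smZ br e F \<longleftrightarrow>
     g_2cocycle smA smL smZ br F
   \<and> (\<forall>a b x y. comp3 smZ e F a b x y = 0)
   \<and> \<not> g_cocycle br (p1_form (comp1 smZ F))"

text \<open>Universal differential module via the standard presentation: Omega^1(A) is the free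
  A-module on symbols d b (b \<in> A) modulo the A-submodule generated by the relations
  d(bc) - b dc - c db, d(b+c) - db - dc, d(\<lambda> b) - \<lambda> db.  Elements of the free module are
  coefficient functions A \<Rightarrow> A (finitely supported); kd e b is the generator d b.\<close>
definition kd :: "'a::comm_ring \<Rightarrow> 'a \<Rightarrow> 'a \<Rightarrow> 'a" where
  "kd e b = (\<lambda>t. if t = b then e else 0)"

inductive_set kahler_rel :: "('k::field \<Rightarrow> 'a::comm_ring \<Rightarrow> 'a) \<Rightarrow> 'a \<Rightarrow> ('a \<Rightarrow> 'a) set"
  for smA :: "'k::field \<Rightarrow> 'a::comm_ring \<Rightarrow> 'a" and e :: 'a where
  kr_zero: "(\<lambda>_. 0) \<in> kahler_rel smA e"
| kr_add: "u \<in> kahler_rel smA e \<Longrightarrow> v \<in> kahler_rel smA e \<Longrightarrow> (\<lambda>t. u t + v t) \<in> kahler_rel smA e"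
| kr_mult: "u \<in> kahler_rel smA e \<Longrightarrow> (\<lambda>t. c * u t) \<in> kahler_rel smA e"
| kr_scale: "u \<in> kahler_rel smA e \<Longrightarrow> (\<lambda>t. smA k (u t)) \<in> kahler_rel smA e"
| kr_leibniz: "(\<lambda>t. kd e (b * c) t - b * kd e c t - c * kd e b t) \<in> kahler_rel smA e"
| kr_additive: "(\<lambda>t. kd e (b + c) t - kd e b t - kd e c t) \<in> kahler_rel smA e"
| kr_homog: "(\<lambda>t. kd e (smA k b) t - smA k (kd e b t)) \<in> kahler_rel smA e"

definition dA_nonzero :: "('k::field \<Rightarrow> 'a::comm_ring \<Rightarrow> 'a) \<Rightarrow> 'a \<Rightarrow> bool" where
  "dA_nonzero smA e \<longleftrightarrow> (\<exists>a. kd e a \<notin> kahler_rel smA e)"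

text \<open>There is an invariant symmetric bilinear form \<kappa> on k with \<Gamma>(\<kappa>) a non-zero
  coboundary in Z^3(k) (trivial coefficients K): \<Gamma>(\<kappa>) = d\<omega> for an alternating bilinear
  \<omega> : k \<times> k \<rightarrow> K, with (d\<omega>)(x,y,z) = -\<omega>([x,y],z) + \<omega>([x,z],y) - \<omega>([y,z],x).\<close>
definition Gamma_cond :: "('k::field \<Rightarrow> 'l::ab_group_add \<Rightarrow> 'l) \<Rightarrow> ('l \<Rightarrow> 'l \<Rightarrow> 'l) \<Rightarrow> bool" where
  "Gamma_cond smL br \<longleftrightarrow> (\<exists>\<kappa> :: 'l \<Rightarrow> 'l \<Rightarrow> 'k.
      (\<forall>y. is_lin smL (*) (\<lambda>x. \<kappa> x y)) \<and> (\<forall>x. is_lin smL (*) (\<lambda>y. \<kappa> x y))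
    \<and> (\<forall>x y. \<kappa> x y = \<kappa> y x)
    \<and> (\<forall>x y z. \<kappa> (br x y) z = \<kappa> x (br y z))
    \<and> (\<exists>x y z. \<kappa> (br x y) z \<noteq> 0)
    \<and> (\<exists>\<omega> :: 'l \<Rightarrow> 'l \<Rightarrow> 'k.
          (\<forall>y. is_lin smL (*) (\<lambda>x. \<omega> x y)) \<and> (\<forall>x. is_lin smL (*) (\<lambda>y. \<omega> x y))
        \<and> (\<forall>x. \<omega> x x = 0)
        \<and> (\<forall>x y z. \<kappa> (br x y) z = - \<omega> (br x y) z + \<omega> (br x z) y - \<omega> (br y z) x)))"

definition good_decomposition where
  "good_decomposition smA smL smZ br e F \<longleftrightarrow> (\<exists>G0 G1.
      LS_form smA smL smZ G0 \<and> LS_form smA smL smZ G1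
    \<and> (\<forall>a b x y. comp1 smZ F a b x y = G0 a b x y + G1 a b x y)
    \<and> g_cocycle br (p1_form G0) \<and> g_cocycle br (p1_form G1)
    \<and> g_cocycle br (p2_form (comp2 smZ e F)) \<and> g_cocycle br (p3_form (comp3 smZ e F))
    \<comment> \<open>(a)\<close>
    \<and> vanishes_g_g' br (p1_form G0)
    \<comment> \<open>(b): values invariant (symmetric bilinear by LS_form) and cyclic 1-cocycle\<close>
    \<and> (\<forall>a b x y w. G1 a b (br x y) w = G1 a b x (br y w))
    \<and> (\<forall>a b c x y. G1 a (b * c) x y + G1 b (c * a) x y + G1 c (a * b) x y = 0)
    \<comment> \<open>(c)\<close>
    \<and> (\<forall>a x y w. comp2 smZ e F a (br x y) w + comp2 smZ e F a (br y w) x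
                   + comp2 smZ e F a (br w x) y = 0)
    \<comment> \<open>(d)\<close>
    \<and> vanishes_g_g' br (p3_form (comp3 smZ e F)))"

end

theory Submission
  imports Defs "HOL-Library.Function_Algebras" "HOL-Library.Groups_Big_Fun"
begin

(*
  Write f = f1 o p1 + f2 o p2 + f3 o p3.  Evaluating the cocycle identity on (a x, b y, c w)
  with some of a, b, c equal to 1 shows that f3 vanishes on g x g', that f1(a,b) is invariant,
  that f1(t,1)([x,y],w) = -(f2(t)([x,y],w) + cyclic permutations), and that the cyclic sum of
  f1 o p1 is f1(abc,1)([x,y],w).  So f1 o p1 fails to be a cocycle only if some
  f1(t,1)([x,y],w) is non-zero, and then both conditions of the theorem hold: composed with a
  suitable functional, f1(t,1) becomes an invariant symmetric form kappa with Gamma(kappa) = d omega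
  non-zero (omega coming from f2(t)), and s d_A b |-> f1(s,b)([x,y],w) - f1(sb,1)([x,y],w) is well
  defined on Omega^1(A), its Leibniz rule being the cyclic-sum identity, and non-zero on d_A t.
  Conversely, a functional phi on Omega^1(A) with phi(d_A a) = 1 and such kappa, omega give the
  coupled cocycle (a x, b y) |-> phi(a d_A b - b d_A a) kappa(x,y) - phi(d_A(ab)) omega(x,y).
  Without coupled cocycles, a projection P onto k' splits f1 into the part
  f1(x, Py) + f1(Px, y) - f1(Px, Py) seen by brackets and a remainder vanishing on g x g'.
*)

section \<open>Linear maps\<close>

lemma is_lin_add: "is_lin s1 s2 f \<Longrightarrow> f (u + v) = f u + f v"
  by (simp add: is_lin_def)

lemma is_lin_scale: "is_lin s1 s2 f \<Longrightarrow> f (s1 c u) = s2 c (f u)"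
  by (simp add: is_lin_def)

lemma is_lin_zero:
  fixes f :: "'b::ab_group_add \<Rightarrow> 'c::ab_group_add"
  shows "is_lin s1 s2 f \<Longrightarrow> f 0 = 0"
  using is_lin_add[of s1 s2 f 0 0] by simp

lemma is_lin_neg:
  fixes f :: "'b::ab_group_add \<Rightarrow> 'c::ab_group_add"
  shows "is_lin s1 s2 f \<Longrightarrow> f (- u) = - f u"
  using is_lin_add[of s1 s2 f u "- u"] is_lin_zero[of s1 s2 f]
  by (simp add: eq_neg_iff_add_eq_0 add.commute)

lemma is_lin_diff:
  fixes f :: "'b::ab_group_add \<Rightarrow> 'c::ab_group_add"
  assumes "is_lin s1 s2 f"
  shows "f (u - v) = f u - f v"
  using is_lin_add[OF assms, of u "- v"] is_lin_neg[OF assms, of v] by simp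

lemma is_lin_comp: "is_lin s1 s2 f \<Longrightarrow> is_lin s2 s3 g \<Longrightarrow> is_lin s1 s3 (\<lambda>x. g (f x))"
  by (simp add: is_lin_def)

lemma linear_imp_is_lin: "Vector_Spaces.linear s1 s2 f \<Longrightarrow> is_lin s1 s2 f"
  by (simp add: Vector_Spaces.linear_iff is_lin_def)

context vector_space
begin

lemma is_lin_add_fun:
  "is_lin s scale f \<Longrightarrow> is_lin s scale g \<Longrightarrow> is_lin s scale (\<lambda>u. f u + g u)"
  by (simp add: is_lin_def add_ac scale_right_distrib)

lemma is_lin_diff_fun:
  "is_lin s scale f \<Longrightarrow> is_lin s scale g \<Longrightarrow> is_lin s scale (\<lambda>u. f u - g u)"
  by (simp add: is_lin_def scale_right_diff_distrib)

lemma is_lin_scale_fun: "is_lin s scale f \<Longrightarrow> is_lin s scale (\<lambda>u. scale c (f u))"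
  by (simp add: is_lin_def scale_right_distrib mult.commute)

lemma double_eq_zero_imp_eq_zero:
  assumes "(2::'a) \<noteq> 0" and "v + v = (0::'b)"
  shows "v = 0"
proof -
  have "scale 2 v = v + v"
    by (metis one_add_one scale_left_distrib scale_one)
  then show ?thesis using assms by simp
qed

lemma sum_and_diff_eq_zero_imp_eq_zero:
  assumes "(2::'a) \<noteq> 0" and "u + v = (0::'b)" and "u - v = 0"
  shows "u = 0" and "v = 0"
proof -
  have "u + u = (u + v) + (u - v)" by (simp add: algebra_simps)
  then have "u + u = 0" using assms by simp
  then show "u = 0" by (rule double_eq_zero_imp_eq_zero[OF assms(1)])
  then show "v = 0" using assms(2) by simp
qed

lemma half_sum_plus_half_diff:
  assumes "(2::'a) \<noteq> 0"
  shows "scale (inverse 2) (p + q) + scale (inverse 2) (p - q) = p"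
proof -
  have "scale 2 p = p + p"
    by (metis one_add_one scale_left_distrib scale_one)
  then have "(p + q) + (p - q) = scale 2 p"
    by simp
  then show ?thesis using assms by (simp flip: scale_right_distrib)
qed

lemma exists_functional_separating:
  assumes S: "subspace S" and v: "v \<notin> S"
  shows "\<exists>f. is_lin scale ((*) :: 'a \<Rightarrow> 'a \<Rightarrow> 'a) f \<and> (\<forall>u\<in>S. f u = 0) \<and> f v = 1"
proof -
  interpret pair: vector_space_pair scale "(*) :: 'a \<Rightarrow> 'a \<Rightarrow> 'a"
    by unfold_locales (simp_all add: algebra_simps)
  obtain B where B: "B \<subseteq> S" "independent B" "S \<subseteq> span B"
    using maximal_independent_subset by blast
  have "v \<notin> span B" using B(1) S span_minimal v by blast
  then obtain g where g: "Vector_Spaces.linear scale (*) g"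
      "\<forall>x\<in>insert v B. g x = (if x = v then 1 else 0)"
    using pair.linear_independent_extend[OF independent_insertI[OF _ B(2)],
        of v "\<lambda>x. if x = v then 1 else 0"]
    by blast
  have "g u = 0" if "u \<in> S" for u
    using pair.linear_eq_on[OF g(1) pair.linear_zero, of u B] B(3) that g(2) \<open>v \<notin> span B\<close>
      span_base
    by fastforce
  then show ?thesis using g linear_imp_is_lin by fastforce
qed

lemma exists_projection_onto_span:
  "\<exists>P. is_lin scale scale P \<and> (\<forall>v\<in>span X. P v = v) \<and> (\<forall>v. P v \<in> span X)"
proof -
  interpret pair: vector_space_pair scale scale ..
  obtain B where B: "B \<subseteq> span X" "independent B" "span X \<subseteq> span B"
    using maximal_independent_subset by blast
  have span_B: "span B = span X" using B span_minimal[OF B(1)] by blast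
  obtain g where g: "Vector_Spaces.linear scale scale g" "\<forall>x\<in>B. g x = x" "range g = span B"
    using pair.linear_independent_extend_subspace[OF B(2), of id] by auto
  have "\<forall>v\<in>span X. g v = v"
    using pair.linear_eq_on[OF g(1) linear_id] g(2) span_B by fastforce
  then show ?thesis using g span_B linear_imp_is_lin by blast
qed

lemma vector_space_pointwise: "Vector_Spaces.vector_space (\<lambda>c (u :: 'c \<Rightarrow> 'b) t. scale c (u t))"
  by unfold_locales (simp_all add: fun_eq_iff scale_right_distrib scale_left_distrib)

lemma is_lin_kernel_subspace:
  assumes "Vector_Spaces.vector_space s2" and "is_lin scale s2 f"
  shows "subspace {v. f v = 0}"
proof -
  interpret V2: vector_space s2 by fact
  show ?thesis
    by (rule subspaceI)
      (simp_all add: is_lin_zero[OF assms(2)] is_lin_add[OF assms(2)] is_lin_scale[OF assms(2)])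
qed

end


section \<open>Functionals on the universal differential module\<close>

(* D b s stands for phi(s d_A b) for a linear map phi on Omega^1(A): the clauses are the
   defining relations of Omega^1(A). *)
definition leibniz_pairing :: "('k::field \<Rightarrow> 'a::comm_ring \<Rightarrow> 'a) \<Rightarrow> ('k \<Rightarrow> 'z::ab_group_add \<Rightarrow> 'z)
    \<Rightarrow> ('a \<Rightarrow> 'a \<Rightarrow> 'z) \<Rightarrow> bool" where
  "leibniz_pairing smA smZ D \<longleftrightarrow>
     (\<forall>b. is_lin smA smZ (D b))
   \<and> (\<forall>b c s. D (b + c) s = D b s + D c s)
   \<and> (\<forall>k b s. D (smA k b) s = smZ k (D b s))
   \<and> (\<forall>b c s. D (b * c) s = D c (b * s) + D b (c * s))"

lemma
  assumes "leibniz_pairing smA smZ D"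
  shows leibniz_pairing_lin: "is_lin smA smZ (D b)"
    and leibniz_pairing_add: "D (b + c) s = D b s + D c s"
    and leibniz_pairing_scale: "D (smA k b) s = smZ k (D b s)"
    and leibniz_pairing_mult: "D (b * c) s = D c (b * s) + D b (c * s)"
  using assms by (simp_all add: leibniz_pairing_def)

locale unital_algebra =
  fixes smA :: "'k::field \<Rightarrow> 'a::comm_ring \<Rightarrow> 'a" and e :: 'a
  assumes algebra: "comm_K_algebra smA e"
begin

sublocale A: vector_space smA
  using algebra by (simp add: comm_K_algebra_def)

lemma unit_mult [simp]: "e * a = a"
  using algebra by (simp add: comm_K_algebra_def)

lemma mult_unit [simp]: "a * e = a"
  using unit_mult by (simp add: mult.commute)

lemma scale_mult: "smA c (a * b) = smA c a * b"
  using algebra by (simp add: comm_K_algebra_def)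

lemma mult_scale: "a * smA c b = smA c (a * b)"
  by (metis mult.commute scale_mult)

lemma mult_right_is_lin: "is_lin smA smA (\<lambda>s. s * b)"
  by (simp add: is_lin_def distrib_right scale_mult)

lemma leibniz_pairing_unit:
  assumes "leibniz_pairing smA smZ D"
  shows "D e s = 0"
  using leibniz_pairing_mult[OF assms, of e e s]
  by (simp only: unit_mult add_cancel_right_right)

lemma leibniz_pairing_cyclic:
  assumes "leibniz_pairing smA smZ D"
  shows "(D c (a * b) - D (a * b) c) + (D a (b * c) - D (b * c) a) + (D b (c * a) - D (c * a) b)
     = - D (a * b * c) e"
  using leibniz_pairing_mult[OF assms, of a b c] leibniz_pairing_mult[OF assms, of b c a]
    leibniz_pairing_mult[OF assms, of c a b] leibniz_pairing_mult[OF assms, of a "b * c" e]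
  by (simp add: algebra_simps)

lemma kahler_rel_finite_support: "u \<in> kahler_rel smA e \<Longrightarrow> finite {t. u t \<noteq> 0}"
proof (induction rule: kahler_rel.induct)
  case (kr_add u v)
  then show ?case by (auto intro: finite_subset[of _ "{t. u t \<noteq> 0} \<union> {t. v t \<noteq> 0}"])
next
  case (kr_mult u c)
  then show ?case by (auto intro: finite_subset[of _ "{t. u t \<noteq> 0}"])
next
  case (kr_scale u k)
  then show ?case by (auto intro: finite_subset[of _ "{t. u t \<noteq> 0}"])
next
  case (kr_leibniz b c)
  show ?case by (rule finite_subset[of _ "{b * c, c, b}"]) (auto simp: kd_def)
next
  case (kr_additive b c)
  show ?case by (rule finite_subset[of _ "{b + c, b, c}"]) (auto simp: kd_def)
next
  case (kr_homog k b)
  show ?case by (rule finite_subset[of _ "{smA k b, b}"]) (auto simp: kd_def)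
qed simp

lemma kahler_rel_subspace: "module.subspace (\<lambda>k u t. smA k (u t)) (kahler_rel smA e)"
proof -
  interpret V: vector_space "\<lambda>k (u :: 'a \<Rightarrow> 'a) t. smA k (u t)"
    by (rule A.vector_space_pointwise)
  show ?thesis
  proof (rule V.subspaceI)
    show "0 \<in> kahler_rel smA e"
      using kahler_rel.kr_zero by (simp add: zero_fun_def)
    show "u + v \<in> kahler_rel smA e" if "u \<in> kahler_rel smA e" "v \<in> kahler_rel smA e" for u v
      using kahler_rel.kr_add[OF that] by (simp add: plus_fun_def)
  qed (rule kahler_rel.kr_scale)
qed

lemma exists_leibniz_pairing:
  assumes "kd e b \<notin> kahler_rel smA e"
  shows "\<exists>D :: 'a \<Rightarrow> 'a \<Rightarrow> 'k. leibniz_pairing smA (*) D \<and> D b e = 1"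
proof -
  interpret V: vector_space "\<lambda>k (u :: 'a \<Rightarrow> 'a) t. smA k (u t)"
    by (rule A.vector_space_pointwise)
  obtain \<mu> where \<mu>: "is_lin (\<lambda>k u t. smA k (u t)) (*) \<mu>" "\<forall>u\<in>kahler_rel smA e. \<mu> u = 0"
    "\<mu> (kd e b) = 1"
    using V.exists_functional_separating[OF kahler_rel_subspace assms] by blast
  have \<mu>_diff: "\<mu> (\<lambda>t. u t - v t) = \<mu> u - \<mu> v" for u v
    using is_lin_diff[OF \<mu>(1), of u v] by (simp add: fun_diff_def)
  have \<mu>_rel: "\<mu> (\<lambda>t. s * u t) = 0" if "u \<in> kahler_rel smA e" for s u
    using \<mu>(2) kahler_rel.kr_mult[OF that] by blast
  define D where "D b s = \<mu> (\<lambda>t. s * kd e b t)" for b s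
  have "is_lin smA (*) (D b)" for b
    using is_lin_add[OF \<mu>(1)] is_lin_scale[OF \<mu>(1)]
    by (simp add: is_lin_def D_def distrib_right plus_fun_def flip: scale_mult)
  moreover have "D (b + c) s = D b s + D c s" for b c s
    using \<mu>_rel[OF kahler_rel.kr_additive, of s b c]
    by (simp add: D_def right_diff_distrib \<mu>_diff diff_eq_eq add.commute)
  moreover have "D (smA k b) s = k * D b s" for k b s
    using \<mu>_rel[OF kahler_rel.kr_homog, of s k b] is_lin_scale[OF \<mu>(1), of k "\<lambda>t. s * kd e b t"]
    by (simp add: D_def right_diff_distrib \<mu>_diff mult_scale)
  moreover have "D (b * c) s = D c (b * s) + D b (c * s)" for b c s
    using \<mu>_rel[OF kahler_rel.kr_leibniz, of s b c]
    by (simp add: D_def right_diff_distrib \<mu>_diff diff_eq_eq mult_ac)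
  moreover have "D b e = 1"
    using \<mu>(3) by (simp add: D_def)
  ultimately show ?thesis
    unfolding leibniz_pairing_def by blast
qed

end

locale kahler_pairing = unital_algebra smA e + Z: vector_space smZ
  for smA :: "'k::field \<Rightarrow> 'a::comm_ring \<Rightarrow> 'a" and e :: 'a
    and smZ :: "'k \<Rightarrow> 'z::ab_group_add \<Rightarrow> 'z" +
  fixes D :: "'a \<Rightarrow> 'a \<Rightarrow> 'z"
  assumes leibniz: "leibniz_pairing smA smZ D"
begin

lemmas D_lin = leibniz_pairing_lin[OF leibniz]

lemma D_zero [simp]: "D b 0 = 0"
  by (rule is_lin_zero[OF D_lin])

lemma pairing_superset:
  assumes "finite S" and "{t. u t \<noteq> 0} \<subseteq> S"
  shows "(\<Sum>t. D t (s * u t)) = (\<Sum>t\<in>S. D t (s * u t))"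
  by (rule Sum_any.expand_superset) (use assms in auto)

lemma pairing_kd:
  assumes "finite S" and "p \<in> S"
  shows "(\<Sum>t\<in>S. D t (m * kd e p t)) = D p m"
proof -
  have "(\<Sum>t\<in>S. D t (m * kd e p t)) = (\<Sum>t\<in>S. if t = p then D p m else 0)"
    by (rule sum.cong) (auto simp: kd_def)
  then show ?thesis
    using assms by simp
qed

lemma pairing_kr_leibniz: "(\<Sum>t. D t (s * (kd e (b * c) t - b * kd e c t - c * kd e b t))) = 0"
proof -
  let ?S = "{b * c, c, b}"
  have "(\<Sum>t. D t (s * (kd e (b * c) t - b * kd e c t - c * kd e b t)))
      = (\<Sum>t\<in>?S. D t (s * kd e (b * c) t)) - (\<Sum>t\<in>?S. D t ((s * b) * kd e c t))
        - (\<Sum>t\<in>?S. D t ((s * c) * kd e b t))"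
    by (subst pairing_superset[of ?S])
       (auto simp: kd_def right_diff_distrib is_lin_diff[OF D_lin] sum_subtractf mult.assoc)
  also have "\<dots> = D (b * c) s - D c (s * b) - D b (s * c)"
    by (simp add: pairing_kd)
  also have "\<dots> = 0"
    by (simp add: leibniz_pairing_mult[OF leibniz] mult.commute)
  finally show ?thesis .
qed

lemma pairing_kr_additive: "(\<Sum>t. D t (s * (kd e (b + c) t - kd e b t - kd e c t))) = 0"
proof -
  let ?S = "{b + c, b, c}"
  have "(\<Sum>t. D t (s * (kd e (b + c) t - kd e b t - kd e c t)))
      = (\<Sum>t\<in>?S. D t (s * kd e (b + c) t)) - (\<Sum>t\<in>?S. D t (s * kd e b t))
        - (\<Sum>t\<in>?S. D t (s * kd e c t))"
    by (subst pairing_superset[of ?S])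
       (auto simp: kd_def right_diff_distrib is_lin_diff[OF D_lin] sum_subtractf)
  also have "\<dots> = D (b + c) s - D b s - D c s"
    by (simp add: pairing_kd)
  also have "\<dots> = 0"
    by (simp add: leibniz_pairing_add[OF leibniz])
  finally show ?thesis .
qed

lemma pairing_kr_homog: "(\<Sum>t. D t (s * (kd e (smA k b) t - smA k (kd e b t)))) = 0"
proof -
  let ?S = "{smA k b, b}"
  have "(\<Sum>t. D t (s * (kd e (smA k b) t - smA k (kd e b t))))
      = (\<Sum>t\<in>?S. D t (s * kd e (smA k b) t)) - smZ k (\<Sum>t\<in>?S. D t (s * kd e b t))"
    by (subst pairing_superset[of ?S])
       (auto simp: kd_def right_diff_distrib is_lin_diff[OF D_lin] sum_subtractf mult_scale
         is_lin_scale[OF D_lin] Z.scale_sum_right)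
  also have "\<dots> = D (smA k b) s - smZ k (D b s)"
    by (simp add: pairing_kd)
  also have "\<dots> = 0"
    by (simp add: leibniz_pairing_scale[OF leibniz])
  finally show ?thesis .
qed

lemma pairing_kahler_rel_eq_zero:
  "u \<in> kahler_rel smA e \<Longrightarrow> (\<Sum>t. D t (s * u t)) = 0"
proof (induction arbitrary: s rule: kahler_rel.induct)
  case (kr_add u v)
  let ?S = "{t. u t \<noteq> 0} \<union> {t. v t \<noteq> 0}"
  have fin: "finite ?S"
    using kr_add.hyps by (simp add: kahler_rel_finite_support)
  have "(\<Sum>t. D t (s * (u t + v t))) = (\<Sum>t\<in>?S. D t (s * (u t + v t)))"
    by (rule pairing_superset[OF fin]) auto
  also have "\<dots> = (\<Sum>t\<in>?S. D t (s * u t)) + (\<Sum>t\<in>?S. D t (s * v t))"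
    by (simp add: distrib_left is_lin_add[OF D_lin] sum.distrib)
  also have "\<dots> = 0"
    using kr_add.IH pairing_superset[OF fin, of u] pairing_superset[OF fin, of v] by auto
  finally show ?case .
next
  case (kr_mult u c)
  show ?case
    using kr_mult.IH[of "s * c"] by (simp add: mult.assoc)
next
  case (kr_scale u k)
  let ?S = "{t. u t \<noteq> 0}"
  have fin: "finite ?S"
    using kr_scale.hyps by (rule kahler_rel_finite_support)
  have "(\<Sum>t. D t (s * smA k (u t))) = smZ k (\<Sum>t\<in>?S. D t (s * u t))"
    using pairing_superset[OF fin, of "\<lambda>t. smA k (u t)"]
    by (auto simp: mult_scale is_lin_scale[OF D_lin] Z.scale_sum_right)
  also have "\<dots> = 0"
    using kr_scale.IH pairing_superset[OF fin, of u] by simp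
  finally show ?case .
qed (simp_all add: pairing_kr_leibniz pairing_kr_additive pairing_kr_homog)

lemma pairing_exact_eq_zero:
  assumes "kd e b \<in> kahler_rel smA e"
  shows "D b e = 0"
proof -
  have "D b e = (\<Sum>t\<in>{b}. D t (e * kd e b t))"
    by (simp add: kd_def)
  also have "\<dots> = (\<Sum>t. D t (e * kd e b t))"
    by (rule pairing_superset[symmetric]) (auto simp: kd_def)
  also have "\<dots> = 0"
    by (rule pairing_kahler_rel_eq_zero[OF assms])
  finally show ?thesis .
qed

end


section \<open>2-cocycles on the current algebra\<close>

lemma Gamma_condI:
  fixes \<kappa> \<omega> :: "'l::ab_group_add \<Rightarrow> 'l \<Rightarrow> 'k::field"
  assumes "\<And>y. is_lin smL (*) (\<lambda>x. \<kappa> x y)" and "\<And>x. is_lin smL (*) (\<lambda>y. \<kappa> x y)"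
    and "\<And>x y. \<kappa> x y = \<kappa> y x" and "\<And>x y z. \<kappa> (br x y) z = \<kappa> x (br y z)"
    and "\<kappa> (br x0 y0) z0 \<noteq> 0"
    and "\<And>y. is_lin smL (*) (\<lambda>x. \<omega> x y)" and "\<And>x. is_lin smL (*) (\<lambda>y. \<omega> x y)"
    and "\<And>x. \<omega> x x = 0"
    and "\<And>x y z. \<kappa> (br x y) z = - \<omega> (br x y) z + \<omega> (br x z) y - \<omega> (br y z) x"
  shows "Gamma_cond smL br"
  unfolding Gamma_cond_def using assms by blast

locale current_algebra = unital_algebra smA e
  for smA :: "'k::field \<Rightarrow> 'a::comm_ring \<Rightarrow> 'a" and e :: 'a +
  fixes smL :: "'k \<Rightarrow> 'l::ab_group_add \<Rightarrow> 'l" and br :: "'l \<Rightarrow> 'l \<Rightarrow> 'l"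
  assumes two: "(2::'k) \<noteq> 0" and lie: "lie_algebra smL br"
begin

sublocale L: vector_space smL
  using lie by (simp add: lie_algebra_def)

lemma br_lin_left: "is_lin smL smL (\<lambda>x. br x y)"
  using lie by (simp add: lie_algebra_def)

lemma br_lin_right: "is_lin smL smL (\<lambda>y. br x y)"
  using lie by (simp add: lie_algebra_def)

lemma br_swap: "br x y = - br y x"
proof -
  have "br (x + y) (x + y) = br x x + br x y + (br y x + br y y)"
    using is_lin_add[OF br_lin_left] is_lin_add[OF br_lin_right] by (simp add: add.assoc)
  moreover have "br v v = 0" for v
    using lie by (simp add: lie_algebra_def)
  ultimately show ?thesis
    by (simp add: eq_neg_iff_add_eq_0 add.commute)
qed

definition derived :: "'l set" where
  "derived = L.span {br x y | x y. True}"

lemma br_in_derived: "br x y \<in> derived"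
  unfolding derived_def by (rule L.span_base) blast

end

locale current_cocycle = current_algebra smA e smL br + Z: vector_space smZ
  for smA :: "'k::field \<Rightarrow> 'a::comm_ring \<Rightarrow> 'a" and e :: 'a
    and smL :: "'k \<Rightarrow> 'l::ab_group_add \<Rightarrow> 'l" and br :: "'l \<Rightarrow> 'l \<Rightarrow> 'l"
    and smZ :: "'k \<Rightarrow> 'z::ab_group_add \<Rightarrow> 'z" +
  fixes F :: "'a \<Rightarrow> 'l \<Rightarrow> 'a \<Rightarrow> 'l \<Rightarrow> 'z"
  assumes two_cocycle: "g_2cocycle smA smL smZ br F"
begin

abbreviation "f1 \<equiv> comp1 smZ F"
abbreviation "f2 \<equiv> comp2 smZ e F"
abbreviation "f3 \<equiv> comp3 smZ e F"

lemma F_lin_a: "is_lin smA smZ (\<lambda>a. F a x b y)"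
  and F_lin_x: "is_lin smL smZ (\<lambda>x. F a x b y)"
  and F_lin_b: "is_lin smA smZ (\<lambda>b. F a x b y)"
  and F_lin_y: "is_lin smL smZ (\<lambda>y. F a x b y)"
  and F_skew: "F b y a x = - F a x b y"
  using two_cocycle unfolding g_2cocycle_def g_form_def by blast+

lemma F_cocycle: "F (a * b) (br x y) c w + F (b * c) (br y w) a x + F (c * a) (br w x) b y = 0"
  using two_cocycle by (simp add: g_2cocycle_def g_cocycle_def)

lemma f1_lin_a: "is_lin smA smZ (\<lambda>a. f1 a b x y)"
  and f1_lin_b: "is_lin smA smZ (\<lambda>b. f1 a b x y)"
  and f1_lin_x: "is_lin smL smZ (\<lambda>x. f1 a b x y)"
  and f1_lin_y: "is_lin smL smZ (\<lambda>y. f1 a b x y)"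
  unfolding comp1_def
  by (intro Z.is_lin_scale_fun Z.is_lin_add_fun F_lin_a F_lin_b F_lin_x F_lin_y)+

lemma f2_lin_x: "is_lin smL smZ (\<lambda>x. f2 t x y)"
  and f2_lin_y: "is_lin smL smZ (\<lambda>y. f2 t x y)"
  unfolding comp2_def
  by (intro Z.is_lin_scale_fun Z.is_lin_diff_fun F_lin_x F_lin_y)+

lemma f3_lin_x: "is_lin smL smZ (\<lambda>x. f3 a b x y)"
  and f3_lin_y: "is_lin smL smZ (\<lambda>y. f3 a b x y)"
  unfolding comp3_def
  by (intro Z.is_lin_diff_fun Z.is_lin_scale_fun f2_lin_x f2_lin_y F_lin_x F_lin_y)+

lemmas lin_neg = is_lin_neg[OF f1_lin_x] is_lin_neg[OF f1_lin_y] is_lin_neg[OF f2_lin_x]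
  is_lin_neg[OF f2_lin_y] is_lin_neg[OF f3_lin_x] is_lin_neg[OF f3_lin_y]

lemma f1_sym: "f1 a b y x = f1 a b x y"
  by (simp add: comp1_def add.commute)

lemma f1_skew: "f1 b a x y = - f1 a b x y"
  by (simp add: comp1_def F_skew[of b x a y] F_skew[of b y a x] flip: Z.scale_minus_right)

lemma f2_skew: "f2 t y x = - f2 t x y"
  by (simp add: comp2_def flip: Z.scale_minus_right)

lemma f2_self: "f2 t x x = 0"
  by (simp add: comp2_def)

lemma f3_sym: "f3 b a x y = f3 a b x y"
  by (simp add: comp3_def F_skew[of b x a y] F_skew[of b y a x] mult.commute)

lemma f3_skew: "f3 a b y x = - f3 a b x y"
  by (simp add: comp3_def f2_skew[of "a * b" x y] flip: Z.scale_minus_right)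

lemma f3_unit: "f3 a e x y = 0"
  by (simp add: comp3_def comp2_def)

lemma F_decomp: "F a x b y = f1 a b x y + f2 (a * b) x y + f3 a b x y"
  using Z.half_sum_plus_half_diff[OF two, of "F a x b y" "F a y b x"]
  by (simp add: comp1_def comp3_def)

lemma F_decomp_swap: "F b x a y = - f1 a b x y + f2 (a * b) x y + f3 a b x y"
  by (simp add: F_decomp[of b] f1_skew[of b a] f3_sym[of b a] mult.commute)

lemma F_unit_right: "F t x e y = f1 t e x y + f2 t x y"
  by (simp add: F_decomp f3_unit)

lemma F_unit_left: "F e x t y = - f1 t e x y + f2 t x y"
  by (simp add: F_decomp_swap f3_unit)

lemma
  shows f1_unit_bracket_rotate: "f1 t e (br w x) y = f1 t e (br y w) x"
    and f1_unit_bracket_eq_f2_cyclic: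
      "f1 t e (br x y) w = - (f2 t (br x y) w + f2 t (br y w) x + f2 t (br w x) y)"
proof -
  have rel: "(f1 t e (br w x) y - f1 t e (br y w) x)
      + (f1 t e (br x y) w + (f2 t (br x y) w + f2 t (br y w) x + f2 t (br w x) y)) = 0" for x y w
    using F_cocycle[of t e x y e w] by (simp add: F_unit_right F_unit_left algebra_simps)
  \<comment> \<open>Swapping \<open>x\<close> and \<open>y\<close> flips the sign of the second summand only; as \<open>2 \<noteq> 0\<close>,
    both summands vanish.\<close>
  have "(f1 t e (br w x) y - f1 t e (br y w) x)
      - (f1 t e (br x y) w + (f2 t (br x y) w + f2 t (br y w) x + f2 t (br w x) y)) = 0"
    using rel[where x = y and y = x]
    by (simp add: br_swap[of x y] br_swap[of w x] br_swap[of y w] lin_neg algebra_simps)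
  from Z.sum_and_diff_eq_zero_imp_eq_zero[OF two rel this]
  show "f1 t e (br w x) y = f1 t e (br y w) x"
    and "f1 t e (br x y) w = - (f2 t (br x y) w + f2 t (br y w) x + f2 t (br w x) y)"
    by (simp_all add: add_eq_0_iff2)
qed

lemma
  shows f1_bracket_rotate: "f1 a b (br w x) y = f1 a b (br y w) x"
    and f3_bracket_rotate: "f3 a b (br w x) y = - f3 a b (br y w) x"
proof -
  have rel: "(f1 a b (br w x) y - f1 a b (br y w) x) + (f3 a b (br w x) y + f3 a b (br y w) x) = 0"
    for x y w
  proof -
    have "F b (br y w) a x + F a (br w x) b y - F e (br y w) (a * b) x - F (a * b) (br w x) e y
        = (F (a * b) (br x y) (e * e) w + F (b * e) (br y w) a x + F (e * a) (br w x) b y)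
        - (F ((a * b) * e) (br x y) e w + F (e * e) (br y w) (a * b) x
          + F (e * (a * b)) (br w x) e y)"
      by (simp add: algebra_simps)
    also have "\<dots> = 0"
      using F_cocycle[of a b x y e w] F_cocycle[of "a * b" e x y e w] by simp
    finally show ?thesis
      by (simp add: F_decomp_swap[of b "br y w" a x] F_decomp[of a "br w x" b y]
          F_unit_left[of "br y w" "a * b" x] F_unit_right[of "a * b" "br w x" y]
          f1_unit_bracket_rotate[of "a * b" w x y] algebra_simps)
  qed
  have "(f1 a b (br w x) y - f1 a b (br y w) x) - (f3 a b (br w x) y + f3 a b (br y w) x) = 0"
    using rel[where x = y and y = x]
    by (simp add: br_swap[of x y] br_swap[of w x] br_swap[of y w] lin_neg algebra_simps)
  from Z.sum_and_diff_eq_zero_imp_eq_zero[OF two rel this]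
  show "f1 a b (br w x) y = f1 a b (br y w) x" and "f3 a b (br w x) y = - f3 a b (br y w) x"
    by (simp_all add: add_eq_0_iff2)
qed

lemma f3_bracket_left: "f3 a b (br x y) w = 0"
proof -
  have "f3 a b (br x y) w = - f3 a b (br w x) y" by (rule f3_bracket_rotate)
  also have "f3 a b (br w x) y = - f3 a b (br y w) x" by (rule f3_bracket_rotate)
  also have "f3 a b (br y w) x = - f3 a b (br x y) w" by (rule f3_bracket_rotate)
  finally have "f3 a b (br x y) w + f3 a b (br x y) w = 0"
    by (simp add: eq_neg_iff_add_eq_0)
  then show ?thesis
    by (rule Z.double_eq_zero_imp_eq_zero[OF two])
qed

lemma f3_bracket_right: "f3 a b x (br y w) = 0"
  using f3_bracket_left f3_skew by (metis neg_0_equal_iff_equal)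

lemma f1_bracket_cyclic: "f1 a b (br y w) x = f1 a b (br x y) w"
  using f1_bracket_rotate[of a b y w x] .

lemma f1_invariant: "f1 a b (br x y) w = f1 a b x (br y w)"
  by (simp add: f1_sym[of a b x] f1_bracket_cyclic)

lemma f1_cyclic_sum:
  "f1 (a * b) c (br x y) w + f1 (b * c) a (br x y) w + f1 (c * a) b (br x y) w
     = f1 (a * b * c) e (br x y) w"
proof -
  have "F (a * b) (br x y) c w + F (b * c) (br y w) a x + F (c * a) (br w x) b y
      = (f1 (a * b) c (br x y) w + f1 (b * c) a (br x y) w + f1 (c * a) b (br x y) w)
      + (f2 (a * b * c) (br x y) w + f2 (a * b * c) (br y w) x + f2 (a * b * c) (br w x) y)"
    by (simp add: F_decomp f3_bracket_left f1_bracket_cyclic[where x = x and y = y and w = w]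
        f1_bracket_cyclic[where x = y and y = w and w = x] mult_ac)
  then show ?thesis
    using F_cocycle[of a b x y c w] f1_unit_bracket_eq_f2_cyclic[of "a * b * c" x y w]
    by (simp add: add_eq_0_iff2)
qed

lemma f1_unit_bracket_eq_zero_if_not_Gamma:
  assumes "\<not> Gamma_cond smL br"
  shows "f1 t e (br x y) w = 0"
proof (rule ccontr)
  assume "f1 t e (br x y) w \<noteq> 0"
  then obtain \<mu> where \<mu>: "is_lin smZ (*) \<mu>" "\<mu> (f1 t e (br x y) w) = 1"
    using Z.exists_functional_separating[of "{0}"] by auto
  have "Gamma_cond smL br"
  proof (rule Gamma_condI[where \<kappa> = "\<lambda>x y. \<mu> (f1 t e x y)" and \<omega> = "\<lambda>x y. \<mu> (f2 t x y)"])
    show "is_lin smL (*) (\<lambda>x. \<mu> (f1 t e x y))" for y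
      by (rule is_lin_comp[OF f1_lin_x \<mu>(1)])
    show "is_lin smL (*) (\<lambda>y. \<mu> (f1 t e x y))" for x
      by (rule is_lin_comp[OF f1_lin_y \<mu>(1)])
    show "\<mu> (f1 t e x y) = \<mu> (f1 t e y x)" for x y
      by (simp add: f1_sym)
    show "\<mu> (f1 t e (br x y) z) = \<mu> (f1 t e x (br y z))" for x y z
      by (simp add: f1_invariant)
    show "\<mu> (f1 t e (br x y) w) \<noteq> 0"
      using \<mu>(2) by simp
    show "is_lin smL (*) (\<lambda>x. \<mu> (f2 t x y))" for y
      by (rule is_lin_comp[OF f2_lin_x \<mu>(1)])
    show "is_lin smL (*) (\<lambda>y. \<mu> (f2 t x y))" for x
      by (rule is_lin_comp[OF f2_lin_y \<mu>(1)])
    show "\<mu> (f2 t x x) = 0" for x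
      by (simp add: f2_self is_lin_zero[OF \<mu>(1)])
    show "\<mu> (f1 t e (br x y) z)
        = - \<mu> (f2 t (br x y) z) + \<mu> (f2 t (br x z) y) - \<mu> (f2 t (br y z) x)" for x y z
      using f1_unit_bracket_eq_f2_cyclic[of t x y z]
      by (simp add: br_swap[of z x] lin_neg is_lin_diff[OF \<mu>(1)] is_lin_add[OF \<mu>(1)])
  qed
  with assms show False ..
qed

lemma leibniz_pairing_f1:
  "leibniz_pairing smA smZ (\<lambda>b s. f1 s b (br x y) w - f1 (s * b) e (br x y) w)"
  unfolding leibniz_pairing_def
proof (intro conjI allI)
  show "is_lin smA smZ (\<lambda>s. f1 s b (br x y) w - f1 (s * b) e (br x y) w)" for b
    using is_lin_comp[OF mult_right_is_lin f1_lin_a] by (intro Z.is_lin_diff_fun f1_lin_a)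
  show "f1 s (b + c) (br x y) w - f1 (s * (b + c)) e (br x y) w
      = (f1 s b (br x y) w - f1 (s * b) e (br x y) w)
      + (f1 s c (br x y) w - f1 (s * c) e (br x y) w)"
    for b c s
    by (simp add: distrib_left is_lin_add[OF f1_lin_a] is_lin_add[OF f1_lin_b])
  show "f1 s (smA k b) (br x y) w - f1 (s * smA k b) e (br x y) w
      = smZ k (f1 s b (br x y) w - f1 (s * b) e (br x y) w)" for k b s
    by (simp add: mult_scale is_lin_scale[OF f1_lin_a] is_lin_scale[OF f1_lin_b]
        Z.scale_right_diff_distrib)
  show "f1 s (b * c) (br x y) w - f1 (s * (b * c)) e (br x y) w
      = (f1 (b * s) c (br x y) w - f1 (b * s * c) e (br x y) w)
      + (f1 (c * s) b (br x y) w - f1 (c * s * b) e (br x y) w)" for b c s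
    using f1_cyclic_sum[of b s c x y w] f1_skew[of "c * b" s]
    by (simp add: algebra_simps)
qed

lemma f1_unit_bracket_eq_zero_if_dA_zero:
  assumes "\<not> dA_nonzero smA e"
  shows "f1 t e (br x y) w = 0"
proof -
  interpret kahler_pairing smA e smZ "\<lambda>b s. f1 s b (br x y) w - f1 (s * b) e (br x y) w"
    by (simp add: kahler_pairing_def kahler_pairing_axioms_def unital_algebra_axioms
        Z.vector_space_axioms leibniz_pairing_f1)
  have "f1 e t (br x y) w - f1 t e (br x y) w = 0"
    using pairing_exact_eq_zero[of t] assms by (simp add: dA_nonzero_def)
  then have "f1 t e (br x y) w + f1 t e (br x y) w = 0"
    by (simp add: f1_skew[of e t] neg_eq_iff_add_eq_0)
  then show ?thesis
    by (rule Z.double_eq_zero_imp_eq_zero[OF two])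
qed

lemma f1_unit_bracket_eq_zero:
  assumes "\<not> (dA_nonzero smA e \<and> Gamma_cond smL br)"
  shows "f1 t e (br x y) w = 0"
  using assms f1_unit_bracket_eq_zero_if_dA_zero f1_unit_bracket_eq_zero_if_not_Gamma by blast

lemma p1_cocycleI:
  assumes "\<And>t x y w. f1 t e (br x y) w = 0"
  shows "g_cocycle br (p1_form f1)"
  unfolding g_cocycle_def p1_form_def
  by (simp add: f1_bracket_cyclic f1_bracket_cyclic[where x = y and y = w and w = x]
      f1_cyclic_sum assms)

lemma coupled_cocycle_imp_coupling:
  assumes "coupled_cocycle smA smL smZ br e F"
  shows "dA_nonzero smA e \<and> Gamma_cond smL br"
proof (rule ccontr)
  assume "\<not> (dA_nonzero smA e \<and> Gamma_cond smL br)"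
  then have "g_cocycle br (p1_form f1)"
    by (intro p1_cocycleI f1_unit_bracket_eq_zero)
  with assms show False
    by (simp add: coupled_cocycle_def)
qed

end


section \<open>The decomposition when there is no coupling\<close>

lemma LS_form_lin_a: "LS_form s1 s2 s3 G \<Longrightarrow> is_lin s1 s3 (\<lambda>a. G a b x y)"
  unfolding LS_form_def by blast

lemma LS_form_lin_b: "LS_form s1 s2 s3 G \<Longrightarrow> is_lin s1 s3 (\<lambda>b. G a b x y)"
  unfolding LS_form_def by blast

lemma LS_form_lin_x: "LS_form s1 s2 s3 G \<Longrightarrow> is_lin s2 s3 (\<lambda>x. G a b x y)"
  unfolding LS_form_def by blast

lemma LS_form_lin_y: "LS_form s1 s2 s3 G \<Longrightarrow> is_lin s2 s3 (\<lambda>y. G a b x y)"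
  unfolding LS_form_def by blast

lemma LS_form_skew: "LS_form s1 s2 s3 G \<Longrightarrow> G a b x y = - G b a x y"
  unfolding LS_form_def by blast

lemma LS_form_sym: "LS_form s1 s2 s3 G \<Longrightarrow> G a b x y = G a b y x"
  unfolding LS_form_def by blast

lemma (in vector_space) LS_form_diff:
  assumes G: "LS_form s1 s2 scale G" and G': "LS_form s1 s2 scale G'"
  shows "LS_form s1 s2 scale (\<lambda>a b x y. G a b x y - G' a b x y)"
  unfolding LS_form_def
proof (intro conjI allI is_lin_diff_fun)
  fix a b x y
  show "G a b x y - G' a b x y = - (G b a x y - G' b a x y)"
    using LS_form_skew[OF G, of a b x y] LS_form_skew[OF G', of a b x y] by simp
  show "G a b x y - G' a b x y = G a b y x - G' a b y x"
    using LS_form_sym[OF G, of a b x y] LS_form_sym[OF G', of a b x y] by simp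
qed (simp_all add: LS_form_lin_a[OF G] LS_form_lin_a[OF G'] LS_form_lin_b[OF G]
    LS_form_lin_b[OF G'] LS_form_lin_x[OF G] LS_form_lin_x[OF G'] LS_form_lin_y[OF G]
    LS_form_lin_y[OF G'])

context current_cocycle
begin

lemma f1_LS_form: "LS_form smA smL smZ f1"
  unfolding LS_form_def
proof (intro conjI allI f1_lin_a f1_lin_b f1_lin_x f1_lin_y)
  show "f1 a b x y = - f1 b a x y" for a b x y
    by (simp add: f1_skew[of b a])
  show "f1 a b x y = f1 a b y x" for a b x y
    by (rule f1_sym[symmetric])
qed

(* With P a projection onto k', this is the part of f1 seen by g x g'; the remainder
   f1 - f1_derived P is f1(x - Px, y - Py). *)
definition f1_derived :: "('l \<Rightarrow> 'l) \<Rightarrow> 'a \<Rightarrow> 'a \<Rightarrow> 'l \<Rightarrow> 'l \<Rightarrow> 'z" where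
  "f1_derived P a b x y = f1 a b x (P y) + f1 a b (P x) y - f1 a b (P x) (P y)"

lemma f2_bracket_cyclic:
  assumes "\<not> (dA_nonzero smA e \<and> Gamma_cond smL br)"
  shows "f2 t (br x y) w + f2 t (br y w) x + f2 t (br w x) y = 0"
  by (metis f1_unit_bracket_eq_f2_cyclic f1_unit_bracket_eq_zero[OF assms]
      neg_0_equal_iff_equal)

lemma f1_cyclic_on_derived:
  assumes "\<not> (dA_nonzero smA e \<and> Gamma_cond smL br)" and "v \<in> derived"
  shows "f1 a (b * c) u v + f1 b (c * a) u v + f1 c (a * b) u v = 0"
  using \<open>v \<in> derived\<close> unfolding derived_def
proof (induction rule: L.span_induct)
  case (step v)
  then obtain p q where v: "v = br p q" by blast
  have "f1 a (b * c) u v + f1 b (c * a) u v + f1 c (a * b) u v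
      = - (f1 (b * c) a (br u p) q + f1 (c * a) b (br u p) q + f1 (a * b) c (br u p) q)"
    by (simp add: v f1_invariant[symmetric] f1_skew[of "b * c" a] f1_skew[of "c * a" b]
        f1_skew[of "a * b" c])
  also have "\<dots> = - f1 (b * c * a) e (br u p) q"
    by (simp add: f1_cyclic_sum)
  also have "\<dots> = 0"
    by (simp add: f1_unit_bracket_eq_zero[OF assms(1)])
  finally show ?case .
next
  case base
  show ?case
    by (rule L.is_lin_kernel_subspace[OF Z.vector_space_axioms])
      (intro Z.is_lin_add_fun f1_lin_y)
qed

context
  fixes P :: "'l \<Rightarrow> 'l"
  assumes P_lin: "is_lin smL smL P" and P_id: "\<And>v. v \<in> derived \<Longrightarrow> P v = v"
    and P_derived: "\<And>v. P v \<in> derived"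
begin

lemma f1_derived_left: "v \<in> derived \<Longrightarrow> f1_derived P a b v y = f1 a b v y"
  by (simp add: f1_derived_def P_id)

lemma f1_derived_right: "v \<in> derived \<Longrightarrow> f1_derived P a b x v = f1 a b x v"
  by (simp add: f1_derived_def P_id)

lemma f1_derived_LS_form: "LS_form smA smL smZ (f1_derived P)"
  unfolding LS_form_def
proof (intro conjI allI)
  show "is_lin smA smZ (\<lambda>a. f1_derived P a b x y)" for b x y
    unfolding f1_derived_def by (intro Z.is_lin_diff_fun Z.is_lin_add_fun f1_lin_a)
  show "is_lin smA smZ (\<lambda>b. f1_derived P a b x y)" for a x y
    unfolding f1_derived_def by (intro Z.is_lin_diff_fun Z.is_lin_add_fun f1_lin_b)
  show "is_lin smL smZ (\<lambda>x. f1_derived P a b x y)" for a b y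
    unfolding f1_derived_def using is_lin_comp[OF P_lin f1_lin_x]
    by (intro Z.is_lin_diff_fun Z.is_lin_add_fun f1_lin_x)
  show "is_lin smL smZ (\<lambda>y. f1_derived P a b x y)" for a b x
    unfolding f1_derived_def using is_lin_comp[OF P_lin f1_lin_y]
    by (intro Z.is_lin_diff_fun Z.is_lin_add_fun f1_lin_y)
  show "f1_derived P a b x y = - f1_derived P b a x y" for a b x y
    by (simp add: f1_derived_def f1_skew[of b a])
  show "f1_derived P a b x y = f1_derived P a b y x" for a b x y
    by (simp add: f1_derived_def f1_sym algebra_simps)
qed

lemma f1_derived_cyclic:
  assumes "\<not> (dA_nonzero smA e \<and> Gamma_cond smL br)"
  shows "f1_derived P a (b * c) x y + f1_derived P b (c * a) x y + f1_derived P c (a * b) x y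
    = 0"
proof -
  have "f1_derived P a (b * c) x y + f1_derived P b (c * a) x y + f1_derived P c (a * b) x y
      = (f1 a (b * c) x (P y) + f1 b (c * a) x (P y) + f1 c (a * b) x (P y))
      + (f1 a (b * c) y (P x) + f1 b (c * a) y (P x) + f1 c (a * b) y (P x))
      - (f1 a (b * c) (P x) (P y) + f1 b (c * a) (P x) (P y) + f1 c (a * b) (P x) (P y))"
    by (simp add: f1_derived_def f1_sym[of _ _ "P x" y] algebra_simps)
  then show ?thesis
    using f1_cyclic_on_derived[OF assms P_derived] by simp
qed

lemma good_decomposition_via_projection:
  assumes no_coupling: "\<not> (dA_nonzero smA e \<and> Gamma_cond smL br)"
  shows "good_decomposition smA smL smZ br e F"
  unfolding good_decomposition_def
proof (rule exI[of _ "\<lambda>a b x y. f1 a b x y - f1_derived P a b x y"],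
    rule exI[of _ "f1_derived P"], intro conjI allI)
  show "LS_form smA smL smZ (\<lambda>a b x y. f1 a b x y - f1_derived P a b x y)"
    by (rule Z.LS_form_diff[OF f1_LS_form f1_derived_LS_form])
  show "LS_form smA smL smZ (f1_derived P)"
    by (rule f1_derived_LS_form)
  have "g_cocycle br (p1_form f1)"
    by (intro p1_cocycleI f1_unit_bracket_eq_zero[OF no_coupling])
  then show "g_cocycle br (p1_form (f1_derived P))"
    by (simp add: g_cocycle_def p1_form_def f1_derived_left br_in_derived)
  show "g_cocycle br (p1_form (\<lambda>a b x y. f1 a b x y - f1_derived P a b x y))"
    by (simp add: g_cocycle_def p1_form_def f1_derived_left br_in_derived)
  show "g_cocycle br (p2_form f2)"
    using f2_bracket_cyclic[OF no_coupling] by (simp add: g_cocycle_def p2_form_def mult_ac)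
  show "g_cocycle br (p3_form f3)"
    by (simp add: g_cocycle_def p3_form_def f3_bracket_left)
  show "vanishes_g_g' br (p1_form (\<lambda>a b x y. f1 a b x y - f1_derived P a b x y))"
    by (simp add: vanishes_g_g'_def p1_form_def f1_derived_right br_in_derived)
  show "f1_derived P a b (br x y) w = f1_derived P a b x (br y w)" for a b x y w
    by (simp add: f1_derived_left f1_derived_right br_in_derived f1_invariant)
  show "f1_derived P a (b * c) x y + f1_derived P b (c * a) x y + f1_derived P c (a * b) x y
    = 0" for a b c x y
    by (rule f1_derived_cyclic[OF no_coupling])
  show "f2 a (br x y) w + f2 a (br y w) x + f2 a (br w x) y = 0" for a x y w
    by (rule f2_bracket_cyclic[OF no_coupling])
  show "vanishes_g_g' br (p3_form f3)"
    by (simp add: vanishes_g_g'_def p3_form_def f3_bracket_right)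
qed simp

end

lemma no_coupling_imp_good_decomposition:
  assumes "\<not> (dA_nonzero smA e \<and> Gamma_cond smL br)"
  shows "good_decomposition smA smL smZ br e F"
proof -
  obtain P where "is_lin smL smL P" "\<forall>v\<in>derived. P v = v" "\<forall>v. P v \<in> derived"
    using L.exists_projection_onto_span unfolding derived_def by blast
  then show ?thesis
    using good_decomposition_via_projection assms by blast
qed

end


section \<open>Construction of coupled cocycles\<close>

context current_algebra
begin

definition coupled_form :: "('a \<Rightarrow> 'a \<Rightarrow> 'k) \<Rightarrow> ('l \<Rightarrow> 'l \<Rightarrow> 'k) \<Rightarrow> ('l \<Rightarrow> 'l \<Rightarrow> 'k)
    \<Rightarrow> 'a \<Rightarrow> 'l \<Rightarrow> 'a \<Rightarrow> 'l \<Rightarrow> 'k" where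
  "coupled_form D \<kappa> \<omega> a x b y = (D b a - D a b) * \<kappa> x y - D (a * b) e * \<omega> x y"

context
  fixes D :: "'a \<Rightarrow> 'a \<Rightarrow> 'k" and \<kappa> \<omega> :: "'l \<Rightarrow> 'l \<Rightarrow> 'k"
  assumes D: "leibniz_pairing smA (*) D"
    and \<kappa>_lin_x: "\<And>y. is_lin smL (*) (\<lambda>x. \<kappa> x y)"
    and \<kappa>_lin_y: "\<And>x. is_lin smL (*) (\<lambda>y. \<kappa> x y)"
    and \<kappa>_sym: "\<And>x y. \<kappa> x y = \<kappa> y x"
    and \<kappa>_invariant: "\<And>x y z. \<kappa> (br x y) z = \<kappa> x (br y z)"
    and \<omega>_lin_x: "\<And>y. is_lin smL (*) (\<lambda>x. \<omega> x y)"
    and \<omega>_lin_y: "\<And>x. is_lin smL (*) (\<lambda>y. \<omega> x y)"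
    and \<omega>_alt: "\<And>x. \<omega> x x = 0"
    and \<Gamma>_eq_d\<omega>: "\<And>x y z. \<kappa> (br x y) z = - \<omega> (br x y) z + \<omega> (br x z) y - \<omega> (br y z) x"
begin

lemmas D_lin = leibniz_pairing_lin[OF D]
  and D_add = leibniz_pairing_add[OF D]
  and D_scale = leibniz_pairing_scale[OF D]

lemma \<omega>_skew: "\<omega> y x = - \<omega> x y"
proof -
  have "\<omega> (x + y) (x + y) = \<omega> x x + \<omega> x y + (\<omega> y x + \<omega> y y)"
    using is_lin_add[OF \<omega>_lin_x] is_lin_add[OF \<omega>_lin_y] by (simp add: add.assoc)
  then show ?thesis
    by (simp add: \<omega>_alt eq_neg_iff_add_eq_0 add.commute)
qed

lemma \<kappa>_bracket_cyclic: "\<kappa> (br y w) x = \<kappa> (br x y) w"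
  using \<kappa>_sym[of "br y w" x] \<kappa>_invariant[of x y w] by simp

lemma \<omega>_cyclic: "\<omega> (br x y) w + \<omega> (br y w) x + \<omega> (br w x) y = - \<kappa> (br x y) w"
  using \<Gamma>_eq_d\<omega>[of x y w] br_swap[of w x] is_lin_neg[OF \<omega>_lin_x, of "br x w" y]
  by (simp add: algebra_simps)

lemma coupled_form_g_form: "g_form smA smL (*) (coupled_form D \<kappa> \<omega>)"
  unfolding g_form_def
proof (intro conjI allI)
  show "is_lin smA (*) (\<lambda>a. coupled_form D \<kappa> \<omega> a x b y)" for x b y
    unfolding is_lin_def coupled_form_def
    by (simp add: D_add D_scale is_lin_add[OF D_lin] is_lin_scale[OF D_lin] distrib_right
        mult_scale algebra_simps)
  show "is_lin smA (*) (\<lambda>b. coupled_form D \<kappa> \<omega> a x b y)" for a x y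
    unfolding is_lin_def coupled_form_def
    by (simp add: D_add D_scale is_lin_add[OF D_lin] is_lin_scale[OF D_lin] distrib_left
        mult_scale algebra_simps)
  show "is_lin smL (*) (\<lambda>x. coupled_form D \<kappa> \<omega> a x b y)" for a b y
    unfolding is_lin_def coupled_form_def
    by (simp add: is_lin_add[OF \<kappa>_lin_x] is_lin_add[OF \<omega>_lin_x] is_lin_scale[OF \<kappa>_lin_x]
        is_lin_scale[OF \<omega>_lin_x] algebra_simps)
  show "is_lin smL (*) (\<lambda>y. coupled_form D \<kappa> \<omega> a x b y)" for a x b
    unfolding is_lin_def coupled_form_def
    by (simp add: is_lin_add[OF \<kappa>_lin_y] is_lin_add[OF \<omega>_lin_y] is_lin_scale[OF \<kappa>_lin_y]
        is_lin_scale[OF \<omega>_lin_y] algebra_simps)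
  show "coupled_form D \<kappa> \<omega> a x b y = - coupled_form D \<kappa> \<omega> b y a x" for a x b y
    by (simp add: coupled_form_def \<kappa>_sym[of y x] \<omega>_skew[of y x] mult.commute algebra_simps)
qed

lemma coupled_form_cocycle: "g_cocycle br (coupled_form D \<kappa> \<omega>)"
  unfolding g_cocycle_def
proof (intro allI)
  fix a b c :: 'a and x y w :: 'l
  have "coupled_form D \<kappa> \<omega> (a * b) (br x y) c w + coupled_form D \<kappa> \<omega> (b * c) (br y w) a x
      + coupled_form D \<kappa> \<omega> (c * a) (br w x) b y
    = ((D c (a * b) - D (a * b) c) + (D a (b * c) - D (b * c) a) + (D b (c * a) - D (c * a) b))
        * \<kappa> (br x y) w - D (a * b * c) e * (\<omega> (br x y) w + \<omega> (br y w) x + \<omega> (br w x) y)"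
    by (simp add: coupled_form_def \<kappa>_bracket_cyclic[of y w x] \<kappa>_bracket_cyclic[of w x y]
        algebra_simps)
  also have "\<dots> = 0"
    by (simp add: leibniz_pairing_cyclic[OF D] \<omega>_cyclic)
  finally show "coupled_form D \<kappa> \<omega> (a * b) (br x y) c w
      + coupled_form D \<kappa> \<omega> (b * c) (br y w) a x + coupled_form D \<kappa> \<omega> (c * a) (br w x) b y = 0" .
qed

lemma comp3_coupled_form: "comp3 (*) e (coupled_form D \<kappa> \<omega>) a b x y = 0"
  by (simp add: comp3_def comp2_def coupled_form_def \<kappa>_sym[of y x] \<omega>_skew[of y x] algebra_simps)

lemma comp1_coupled_form:
  "comp1 (*) (coupled_form D \<kappa> \<omega>) a b x y = (D b a - D a b) * \<kappa> x y"
proof -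
  have "coupled_form D \<kappa> \<omega> a x b y + coupled_form D \<kappa> \<omega> a y b x
      = 2 * ((D b a - D a b) * \<kappa> x y)"
    by (simp add: coupled_form_def \<kappa>_sym[of y x] \<omega>_skew[of y x] algebra_simps)
  then show ?thesis
    using two by (simp add: comp1_def)
qed

lemma coupled_form_coupled:
  assumes "D a0 e = 1" and "\<kappa> (br x0 y0) w0 \<noteq> 0"
  shows "coupled_cocycle smA smL (*) br e (coupled_form D \<kappa> \<omega>)"
  unfolding coupled_cocycle_def g_2cocycle_def
proof (intro conjI allI coupled_form_g_form coupled_form_cocycle comp3_coupled_form notI)
  assume "g_cocycle br (p1_form (comp1 (*) (coupled_form D \<kappa> \<omega>)))"
  then have "comp1 (*) (coupled_form D \<kappa> \<omega>) (e * e) a0 (br x0 y0) w0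
      + comp1 (*) (coupled_form D \<kappa> \<omega>) (e * a0) e (br y0 w0) x0
      + comp1 (*) (coupled_form D \<kappa> \<omega>) (a0 * e) e (br w0 x0) y0 = 0"
    unfolding g_cocycle_def p1_form_def by blast
  then have "- \<kappa> (br x0 y0) w0 = 0"
    using assms(1)
    by (simp add: comp1_coupled_form leibniz_pairing_unit[OF D] \<kappa>_bracket_cyclic[of y0 w0 x0]
        \<kappa>_bracket_cyclic[of w0 x0 y0] algebra_simps)
  with assms(2) show False
    by simp
qed

end

lemma exists_coupled_cocycle:
  assumes "dA_nonzero smA e" and "Gamma_cond smL br"
  shows "\<exists>F :: 'a \<Rightarrow> 'l \<Rightarrow> 'a \<Rightarrow> 'l \<Rightarrow> 'k. coupled_cocycle smA smL (*) br e F"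
proof -
  obtain a0 where "kd e a0 \<notin> kahler_rel smA e"
    using assms(1) by (auto simp: dA_nonzero_def)
  then obtain D :: "'a \<Rightarrow> 'a \<Rightarrow> 'k" where D: "leibniz_pairing smA (*) D" "D a0 e = 1"
    using exists_leibniz_pairing by blast
  from assms(2) obtain \<kappa> \<omega> x0 y0 w0 where
    "\<And>y. is_lin smL (*) (\<lambda>x. \<kappa> x y)" "\<And>x. is_lin smL (*) (\<lambda>y. \<kappa> x y)"
    "\<And>x y. \<kappa> x y = \<kappa> y x" "\<And>x y z. \<kappa> (br x y) z = \<kappa> x (br y z)"
    "\<kappa> (br x0 y0) w0 \<noteq> 0"
    "\<And>y. is_lin smL (*) (\<lambda>x. \<omega> x y)" "\<And>x. is_lin smL (*) (\<lambda>y. \<omega> x y)"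
    "\<And>x. \<omega> x x = 0"
    "\<And>x y z. \<kappa> (br x y) z = - \<omega> (br x y) z + \<omega> (br x z) y - \<omega> (br y z) x"
    unfolding Gamma_cond_def by blast
  then show ?thesis
    using coupled_form_coupled[OF D(1)] D(2) by blast
qed

end

theorem theorem3p7:
  fixes smA :: "'k::field \<Rightarrow> 'a::comm_ring \<Rightarrow> 'a" and e :: 'a
    and smL :: "'k \<Rightarrow> 'l::ab_group_add \<Rightarrow> 'l" and br :: "'l \<Rightarrow> 'l \<Rightarrow> 'l"
    and smZ :: "'k \<Rightarrow> 'z::ab_group_add \<Rightarrow> 'z"
  assumes two: "(2::'k) \<noteq> 0"
    and A: "comm_K_algebra smA e"
    and L: "lie_algebra smL br"
    and Z: "Vector_Spaces.vector_space smZ"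
  shows "((\<exists>F :: 'a \<Rightarrow> 'l \<Rightarrow> 'a \<Rightarrow> 'l \<Rightarrow> 'z. coupled_cocycle smA smL smZ br e F)
            \<longrightarrow> dA_nonzero smA e \<and> Gamma_cond smL br)
       \<and> (dA_nonzero smA e \<and> Gamma_cond smL br
            \<longrightarrow> (\<exists>F :: 'a \<Rightarrow> 'l \<Rightarrow> 'a \<Rightarrow> 'l \<Rightarrow> 'k. coupled_cocycle smA smL (*) br e F))
       \<and> (\<not> (dA_nonzero smA e \<and> Gamma_cond smL br)
            \<longrightarrow> (\<forall>F :: 'a \<Rightarrow> 'l \<Rightarrow> 'a \<Rightarrow> 'l \<Rightarrow> 'z. g_2cocycle smA smL smZ br F
                   \<longrightarrow> good_decomposition smA smL smZ br e F))"
proof -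
  interpret current_algebra smA e smL br
    using A L two
    by (simp add: current_algebra_def current_algebra_axioms_def unital_algebra_def)
  have cocycle: "current_cocycle smA e smL br smZ F" if "g_2cocycle smA smL smZ br F" for F
    using that Z by (simp add: current_cocycle_def current_cocycle_axioms_def current_algebra_axioms)
  have "coupled_cocycle smA smL smZ br e F \<Longrightarrow> dA_nonzero smA e \<and> Gamma_cond smL br" for F
    using cocycle current_cocycle.coupled_cocycle_imp_coupling by (metis coupled_cocycle_def)
  then show ?thesis
    using exists_coupled_cocycle cocycle current_cocycle.no_coupling_imp_good_decomposition
    by blast
qed

end
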